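(* Let $G$ be a bipartite simple graph with stable sets $X=\{x_i\}_{i=1}^s$ and $Y=\{y_j\}_{j=1}^t$, and suppose $G\cong H_1\oplus H_2$ is a decomposition of $G$. If $G$ is edge-magic (respectively, super edge-magic), then $S_2(G;H_1,H_2)$ is edge-magic (respectively, super edge-magic).
   Context: For a $(p,q)$-graph $G$ ($p$ vertices, $q$ edges), an edge-magic labeling is a bijection $f:V(G)\cup E(G)\to[1,p+q]$ such that $f(x)+f(xy)+f(y)$ is constant for every edge $xy$; it is super edge-magic if moreover $f(V(G))=[1,p]$. A decomposition $G\cong H_1\oplus H_2$ means $H_1,H_2$ are subgraphs of $G$ whose edge sets partition $E(G)$. $S_2(G;H_1,H_2)$ is the graph with vertex set $X\cup Y\cup X'\cup Y'$, where $X'=\{x_i'\}_{i=1}^s$ and $Y'=\{y_j'\}_{j=1}^t$ are new vertices, and edge set $E(G)\cup\{x_iy_j' : x_iy_j\in E(H_1)\}\cup\{x_i'y_j : x_iy_j\in E(H_2)\}$. *)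

theory Defs
  imports Main
begin

definition simple_graph :: "'a set \<Rightarrow> 'a set set \<Rightarrow> bool" where
  "simple_graph V E \<longleftrightarrow> finite V \<and>
     (\<forall>e\<in>E. \<exists>x y. x \<in> V \<and> y \<in> V \<and> x \<noteq> y \<and> e = {x, y})"

definition bipartite_with :: "'a set \<Rightarrow> 'a set set \<Rightarrow> 'a set \<Rightarrow> 'a set \<Rightarrow> bool" where
  "bipartite_with V E X Y \<longleftrightarrow> X \<inter> Y = {} \<and> X \<union> Y = V \<and>
     (\<forall>e\<in>E. \<exists>x\<in>X. \<exists>y\<in>Y. e = {x, y})"

text \<open>Labelings are functions on the disjoint union of vertices (Inl) and edges (Inr).\<close>
definition edge_magic_labeling :: "'a set \<Rightarrow> 'a set set \<Rightarrow> ('a + 'a set \<Rightarrow> nat) \<Rightarrow> bool" where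
  "edge_magic_labeling V E f \<longleftrightarrow>
     bij_betw f (Inl ` V \<union> Inr ` E) {1 .. card V + card E} \<and>
     (\<exists>k. \<forall>x y. {x, y} \<in> E \<longrightarrow> f (Inl x) + f (Inr {x, y}) + f (Inl y) = k)"

definition super_edge_magic_labeling :: "'a set \<Rightarrow> 'a set set \<Rightarrow> ('a + 'a set \<Rightarrow> nat) \<Rightarrow> bool" where
  "super_edge_magic_labeling V E f \<longleftrightarrow>
     edge_magic_labeling V E f \<and> f ` (Inl ` V) = {1 .. card V}"

definition edge_magic :: "'a set \<Rightarrow> 'a set set \<Rightarrow> bool" where
  "edge_magic V E \<longleftrightarrow> (\<exists>f. edge_magic_labeling V E f)"

definition super_edge_magic :: "'a set \<Rightarrow> 'a set set \<Rightarrow> bool" where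
  "super_edge_magic V E \<longleftrightarrow> (\<exists>f. super_edge_magic_labeling V E f)"

text \<open>The graph S_2(G;H_1,H_2). Original vertices v are Inl v, the new copies v' are Inr v.
  E1, E2 are the edge sets of H_1, H_2.\<close>
definition S2_vertices :: "'a set \<Rightarrow> 'a set \<Rightarrow> ('a + 'a) set" where
  "S2_vertices X Y = Inl ` (X \<union> Y) \<union> Inr ` (X \<union> Y)"

definition S2_edges :: "'a set set \<Rightarrow> 'a set \<Rightarrow> 'a set \<Rightarrow> 'a set set \<Rightarrow> 'a set set \<Rightarrow> ('a + 'a) set set" where
  "S2_edges E X Y E1 E2 =
     (\<lambda>e. Inl ` e) ` E
     \<union> {{Inl x, Inr y} | x y. x \<in> X \<and> y \<in> Y \<and> {x, y} \<in> E1}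
     \<union> {{Inr x, Inl y} | x y. x \<in> X \<and> y \<in> Y \<and> {x, y} \<in> E2}"

end

theory Submission
  imports Defs
begin

text \<open>Every element of S_2(G;H_1,H_2) is a copy of a vertex or an edge of G, and each vertex or
  edge of G has exactly two copies: a vertex v has v and v', an edge of H_i has itself and the
  edge through one primed endpoint. So if f is a (super) edge-magic labeling of G, labeling the
  two copies of d by 2 f(d) - 1 and 2 f(d) is a bijection onto [1, 2(p+q)]. The odd labels go to
  the unprimed vertices and to the new edges; then every edge of S_2 carries exactly two odd
  labels, so its sum is 2k - 2 where k is the magic constant of f, and the unprimed and primed
  vertices receive exactly the labels in [1, 2p] when f is super.\<close>

definition double_label :: "('b \<Rightarrow> nat) \<Rightarrow> 'b \<times> bool \<Rightarrow> nat" where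
  "double_label f = (\<lambda>(d, odd). 2 * f d - of_bool odd)"

lemma bij_betw_double_label:
  assumes "bij_betw f D {1..n}"
  shows "bij_betw (double_label f) (D \<times> UNIV) {1..2 * n}"
proof -
  have inj: "inj_on f D" and img: "f ` D = {1..n}"
    using assms by (auto simp: bij_betw_def)
  have pos: "f d \<ge> 1" if "d \<in> D" for d
    using img that by force
  have "inj_on (double_label f) (D \<times> UNIV)"
  proof (rule inj_onI, clarify)
    fix d b d' b'
    assume "d \<in> D" "d' \<in> D" and "double_label f (d, b) = double_label f (d', b')"
    then have "f d = f d' \<and> b = b'"
      using pos[of d] pos[of d'] by (cases b; cases b'; simp add: double_label_def; presburger)
    then show "d = d' \<and> b = b'"
      using inj \<open>d \<in> D\<close> \<open>d' \<in> D\<close> by (auto dest: inj_onD)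
  qed
  moreover have "double_label f ` (D \<times> UNIV) \<subseteq> {1..2 * n}"
  proof clarify
    fix d b assume "d \<in> D"
    then have "f d \<in> {1..n}" using img by blast
    then show "double_label f (d, b) \<in> {1..2 * n}"
      by (cases b) (auto simp: double_label_def)
  qed
  moreover have "card (D \<times> (UNIV :: bool set)) = 2 * n"
    using bij_betw_same_card[OF assms] by (simp add: card_cartesian_product)
  ultimately show ?thesis
    by (simp add: bij_betw_def card_image card_subset_eq)
qed

lemma card_Plus_eq_if_bij_betw_interval:
  assumes "bij_betw h (Inl ` A \<union> Inr ` B) {1..n}"
  shows "card A + card B = n"
proof -
  have "finite (A <+> B)"
    using bij_betw_finite assms by (fastforce simp: Plus_def)
  then show ?thesis
    using bij_betw_same_card[OF assms] by (simp add: card_Plus flip: Plus_def)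
qed

lemma S2_edge_cases:
  assumes "S \<in> S2_edges E X Y E1 E2"
  obtains (old) e where "e \<in> E" "S = Inl ` e"
    | (new1) x y where "x \<in> X" "y \<in> Y" "{x, y} \<in> E1" "S = {Inl x, Inr y}"
    | (new2) x y where "x \<in> X" "y \<in> Y" "{x, y} \<in> E2" "S = {Inr x, Inl y}"
  using assms unfolding S2_edges_def by blast

text \<open>S2_origin sends an element of S_2 to the vertex or edge of G it copies (an edge by forgetting
  primes), flagged True for the copies that get odd labels; S2_copy is its inverse.\<close>

definition S2_origin :: "('a + 'a) + ('a + 'a) set \<Rightarrow> ('a + 'a set) \<times> bool" where
  "S2_origin z = (case z of
      Inl (Inl v) \<Rightarrow> (Inl v, True)
    | Inl (Inr v) \<Rightarrow> (Inl v, False)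
    | Inr S \<Rightarrow> (Inr (Inl -` S \<union> Inr -` S), \<not> S \<subseteq> range Inl))"

fun S2_copy :: "'a set \<Rightarrow> 'a set \<Rightarrow> 'a set set \<Rightarrow> ('a + 'a set) \<times> bool \<Rightarrow> ('a + 'a) + ('a + 'a) set"
  where
    "S2_copy X Y E1 (Inl v, True) = Inl (Inl v)"
  | "S2_copy X Y E1 (Inl v, False) = Inl (Inr v)"
  | "S2_copy X Y E1 (Inr e, False) = Inr (Inl ` e)"
  | "S2_copy X Y E1 (Inr e, True) = Inr
      (if e \<in> E1 then Inl ` (e \<inter> X) \<union> Inr ` (e \<inter> Y) else Inr ` (e \<inter> X) \<union> Inl ` (e \<inter> Y))"

declare S2_copy.simps(4) [simp del]

lemma S2_origin_simps [simp]:
  "S2_origin (Inl (Inl v)) = (Inl v, True)"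
  "S2_origin (Inl (Inr v)) = (Inl v, False)"
  "S2_origin (Inr (Inl ` e)) = (Inr e, False)"
  "S2_origin (Inr {Inl x, Inl y}) = (Inr {x, y}, False)"
  "S2_origin (Inr {Inl x, Inr y}) = (Inr {x, y}, True)"
  "S2_origin (Inr {Inr x, Inl y}) = (Inr {x, y}, True)"
  by (auto simp: S2_origin_def)

lemma S2_copy_new_edge:
  assumes "X \<inter> Y = {}" "x \<in> X" "y \<in> Y"
  shows "S2_copy X Y E1 (Inr {x, y}, True) =
    Inr (if {x, y} \<in> E1 then {Inl x, Inr y} else {Inr x, Inl y})"
proof -
  have "{x, y} \<inter> X = {x}" "{x, y} \<inter> Y = {y}"
    using assms by auto
  then show ?thesis
    by (auto simp: S2_copy.simps(4))
qed

lemma bij_betw_S2_origin: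
  assumes bip: "bipartite_with V E X Y" and "E1 \<union> E2 = E" and "E1 \<inter> E2 = {}"
  shows "bij_betw S2_origin (Inl ` S2_vertices X Y \<union> Inr ` S2_edges E X Y E1 E2)
           ((Inl ` V \<union> Inr ` E) \<times> UNIV)"
proof (rule bij_betw_byWitness[where f' = "S2_copy X Y E1"])
  have XY: "X \<inter> Y = {}" "X \<union> Y = V" and edge: "\<And>e. e \<in> E \<Longrightarrow> \<exists>x\<in>X. \<exists>y\<in>Y. e = {x, y}"
    using bip by (auto simp: bipartite_with_def)
  note copy_new = S2_copy_new_edge[OF XY(1)]
  show "\<forall>z \<in> Inl ` S2_vertices X Y \<union> Inr ` S2_edges E X Y E1 E2. S2_copy X Y E1 (S2_origin z) = z"
  proof
    fix z assume "z \<in> Inl ` S2_vertices X Y \<union> Inr ` S2_edges E X Y E1 E2"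
    then consider v where "z = Inl v" | S where "z = Inr S" "S \<in> S2_edges E X Y E1 E2"
      by blast
    then show "S2_copy X Y E1 (S2_origin z) = z"
    proof cases
      case 1
      then show ?thesis by (cases v) auto
    next
      case 2
      from 2(2) show ?thesis
      proof (cases rule: S2_edge_cases)
        case old
        then show ?thesis using 2(1) by simp
      next
        case (new1 x y)
        then show ?thesis using 2(1) copy_new by simp
      next
        case (new2 x y)
        then have "{x, y} \<notin> E1" using assms(3) by blast
        then show ?thesis using 2(1) new2 copy_new by simp
      qed
    qed
  qed
  show "\<forall>w \<in> (Inl ` V \<union> Inr ` E) \<times> UNIV. S2_origin (S2_copy X Y E1 w) = w"
  proof
    fix w :: "('a + 'a set) \<times> bool"
    assume "w \<in> (Inl ` V \<union> Inr ` E) \<times> UNIV"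
    then consider v b where "w = (Inl v, b)" | e b where "w = (Inr e, b)" "e \<in> E"
      by blast
    then show "S2_origin (S2_copy X Y E1 w) = w"
    proof cases
      case 1
      then show ?thesis by (cases b) auto
    next
      case 2
      show ?thesis
      proof (cases b)
        case True
        obtain x y where "x \<in> X" "y \<in> Y" "e = {x, y}"
          using edge 2(2) by blast
        then show ?thesis
          using 2(1) True copy_new by simp
      next
        case False
        then show ?thesis
          using 2(1) by simp
      qed
    qed
  qed
  show "S2_origin ` (Inl ` S2_vertices X Y \<union> Inr ` S2_edges E X Y E1 E2) \<subseteq> (Inl ` V \<union> Inr ` E) \<times> UNIV"
  proof (rule image_subsetI)
    fix z assume z: "z \<in> Inl ` S2_vertices X Y \<union> Inr ` S2_edges E X Y E1 E2"
    show "S2_origin z \<in> (Inl ` V \<union> Inr ` E) \<times> UNIV"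
    proof (cases "z \<in> Inl ` S2_vertices X Y")
      case True
      then show ?thesis using XY by (auto simp: S2_vertices_def)
    next
      case False
      then obtain S where "z = Inr S" "S \<in> S2_edges E X Y E1 E2"
        using z by blast
      from this(2) show ?thesis
        by (cases rule: S2_edge_cases) (use \<open>z = Inr S\<close> assms(2) in auto)
    qed
  qed
  show "S2_copy X Y E1 ` ((Inl ` V \<union> Inr ` E) \<times> UNIV) \<subseteq> Inl ` S2_vertices X Y \<union> Inr ` S2_edges E X Y E1 E2"
  proof (rule image_subsetI)
    fix w :: "('a + 'a set) \<times> bool"
    assume "w \<in> (Inl ` V \<union> Inr ` E) \<times> UNIV"
    then obtain d b where w: "w = (d, b)" and "d \<in> Inl ` V \<union> Inr ` E"
      by blast
    then consider v where "d = Inl v" "v \<in> V" | e where "d = Inr e" "e \<in> E"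
      by blast
    then show "S2_copy X Y E1 w \<in> Inl ` S2_vertices X Y \<union> Inr ` S2_edges E X Y E1 E2"
    proof cases
      case 1
      then show ?thesis using w XY by (cases b) (auto simp: S2_vertices_def)
    next
      case 2
      then obtain x y where xy: "x \<in> X" "y \<in> Y" "e = {x, y}"
        using edge by blast
      show ?thesis
      proof (cases b)
        case True
        have "{Inl x, Inr y} \<in> S2_edges E X Y E1 E2" if "{x, y} \<in> E1"
          using xy that unfolding S2_edges_def by blast
        moreover have "{Inr x, Inl y} \<in> S2_edges E X Y E1 E2" if "{x, y} \<notin> E1"
          using xy that 2 assms(2) unfolding S2_edges_def by blast
        ultimately show ?thesis
          using w 2 True xy copy_new by auto
      next
        case False
        have "Inl ` e \<in> S2_edges E X Y E1 E2"
          using 2 unfolding S2_edges_def by blast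
        then show ?thesis
          using w 2 False by auto
      qed
    qed
  qed
qed

lemma S2_edge_label_sum:
  assumes bip: "bipartite_with V E X Y" and "E1 \<union> E2 = E"
    and magic: "\<And>x y. {x, y} \<in> E \<Longrightarrow> f (Inl x) + f (Inr {x, y}) + f (Inl y) = k"
    and pos: "\<And>d. d \<in> Inl ` V \<union> Inr ` E \<Longrightarrow> f d \<ge> 1"
    and pq: "{p, q} \<in> S2_edges E X Y E1 E2"
  shows "double_label f (S2_origin (Inl p)) + double_label f (S2_origin (Inr {p, q}))
           + double_label f (S2_origin (Inl q)) = 2 * k - 2"
proof -
  let ?sum = "\<lambda>u v. double_label f (S2_origin (Inl u)) + double_label f (S2_origin (Inr {u, v}))
    + double_label f (S2_origin (Inl v))"
  have XY: "X \<union> Y = V" and edge: "\<And>e. e \<in> E \<Longrightarrow> \<exists>x\<in>X. \<exists>y\<in>Y. e = {x, y}"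
    using bip by (auto simp: bipartite_with_def)
  have sum_eq: "?sum u v = 2 * (f (Inl x) + f (Inr {x, y}) + f (Inl y)) - 2"
    if "{x, y} \<in> E" "x \<in> X" "y \<in> Y"
      and "(u, v) \<in> {(Inl x, Inl y), (Inl x, Inr y), (Inr x, Inl y)}" for u v x y
  proof -
    have "f (Inl x) \<ge> 1" "f (Inl y) \<ge> 1" "f (Inr {x, y}) \<ge> 1"
      using pos that(1-3) XY by auto
    then show ?thesis
      using that(4) by (auto simp: double_label_def)
  qed
  obtain u v where uv: "{p, q} = {u, v}" and sum_uv: "?sum u v = 2 * k - 2"
    using pq
  proof (cases rule: S2_edge_cases)
    case (old e)
    then obtain x y where "x \<in> X" "y \<in> Y" "e = {x, y}"
      using edge by blast
    then show thesis
      using that[of "Inl x" "Inl y"] old sum_eq[of x y "Inl x" "Inl y"] magic by auto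
  next
    case (new1 x y)
    then show thesis
      using that[of "Inl x" "Inr y"] sum_eq[of x y "Inl x" "Inr y"] magic assms(2) by auto
  next
    case (new2 x y)
    then show thesis
      using that[of "Inr x" "Inl y"] sum_eq[of x y "Inr x" "Inl y"] magic assms(2) by auto
  qed
  from uv have "p = u \<and> q = v \<or> p = v \<and> q = u"
    by (simp add: doubleton_eq_iff)
  then show ?thesis
  proof
    assume "p = v \<and> q = u"
    then show ?thesis
      using sum_uv by (simp add: insert_commute)
  qed (use sum_uv in simp)
qed

lemma double_label_S2_origin_vertices:
  assumes bip: "bipartite_with V E X Y" and f: "bij_betw f (Inl ` V) {1..card V}"
  shows "(double_label f \<circ> S2_origin) ` Inl ` S2_vertices X Y = {1..card (S2_vertices X Y)}"
proof -
  have V': "S2_vertices X Y = V <+> V"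
    using bip by (simp add: bipartite_with_def S2_vertices_def Plus_def)
  have "finite V"
    using bij_betw_finite f finite_imageD inj_Inl inj_on_subset by blast
  then have card: "card (S2_vertices X Y) = 2 * card V"
    by (simp add: V' card_Plus)
  have origin: "S2_origin ` Inl ` S2_vertices X Y = Inl ` V \<times> UNIV"
  proof
    show "S2_origin ` Inl ` S2_vertices X Y \<subseteq> Inl ` V \<times> UNIV"
      by (auto simp: V' Plus_def)
  next
    show "Inl ` V \<times> UNIV \<subseteq> S2_origin ` Inl ` S2_vertices X Y"
    proof clarify
      fix v b assume "v \<in> V"
      then have "Inl (if b then Inl v else Inr v) \<in> Inl ` S2_vertices X Y"
        by (auto simp: V')
      moreover have "(Inl v, b) = S2_origin (Inl (if b then Inl v else Inr v))"
        by (cases b) simp_all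
      ultimately show "(Inl v, b) \<in> S2_origin ` Inl ` S2_vertices X Y"
        by (rule rev_image_eqI)
    qed
  qed
  have "(double_label f \<circ> S2_origin) ` Inl ` S2_vertices X Y = double_label f ` (Inl ` V \<times> UNIV)"
    by (simp only: image_comp [symmetric] origin)
  also have "\<dots> = {1..2 * card V}"
    using bij_betw_double_label[OF f] by (simp add: bij_betw_def)
  finally show ?thesis
    by (simp add: card)
qed

lemma edge_magic_labeling_S2:
  assumes bip: "bipartite_with V E X Y" and "E1 \<union> E2 = E" and "E1 \<inter> E2 = {}"
    and f: "edge_magic_labeling V E f"
  shows "edge_magic_labeling (S2_vertices X Y) (S2_edges E X Y E1 E2) (double_label f \<circ> S2_origin)"
proof -
  have bij: "bij_betw f (Inl ` V \<union> Inr ` E) {1..card V + card E}"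
    and "\<exists>k. \<forall>x y. {x, y} \<in> E \<longrightarrow> f (Inl x) + f (Inr {x, y}) + f (Inl y) = k"
    using f by (auto simp: edge_magic_labeling_def)
  then obtain k where magic: "\<And>x y. {x, y} \<in> E \<Longrightarrow> f (Inl x) + f (Inr {x, y}) + f (Inl y) = k"
    by blast
  have pos: "f d \<ge> 1" if "d \<in> Inl ` V \<union> Inr ` E" for d
    using bij that by (force simp: bij_betw_def)
  have bij': "bij_betw (double_label f \<circ> S2_origin)
      (Inl ` S2_vertices X Y \<union> Inr ` S2_edges E X Y E1 E2) {1..2 * (card V + card E)}"
    using bij_betw_trans[OF bij_betw_S2_origin[OF assms(1-3)] bij_betw_double_label[OF bij]] .
  moreover have "card (S2_vertices X Y) + card (S2_edges E X Y E1 E2) = 2 * (card V + card E)"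
    using card_Plus_eq_if_bij_betw_interval[OF bij'] .
  moreover have "(double_label f \<circ> S2_origin) (Inl p) + (double_label f \<circ> S2_origin) (Inr {p, q})
      + (double_label f \<circ> S2_origin) (Inl q) = 2 * k - 2"
    if "{p, q} \<in> S2_edges E X Y E1 E2" for p q
    using S2_edge_label_sum[OF bip assms(2) magic pos that] by simp
  ultimately show ?thesis
    unfolding edge_magic_labeling_def by metis
qed

lemma super_edge_magic_labeling_S2:
  assumes bip: "bipartite_with V E X Y" and "E1 \<union> E2 = E" and "E1 \<inter> E2 = {}"
    and f: "super_edge_magic_labeling V E f"
  shows "super_edge_magic_labeling (S2_vertices X Y) (S2_edges E X Y E1 E2) (double_label f \<circ> S2_origin)"
proof -
  have "bij_betw f (Inl ` V \<union> Inr ` E) {1..card V + card E}" and "f ` Inl ` V = {1..card V}"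
    using f by (auto simp: super_edge_magic_labeling_def edge_magic_labeling_def)
  then have "bij_betw f (Inl ` V) {1..card V}"
    by (auto simp: bij_betw_def intro: inj_on_subset)
  then show ?thesis
    using f edge_magic_labeling_S2[OF assms(1-3)] double_label_S2_origin_vertices[OF bip]
    by (auto simp: super_edge_magic_labeling_def)
qed

theorem mainTheorem7:
  fixes V X Y :: "'a set" and E E1 E2 :: "'a set set"
  assumes "simple_graph V E"
    and "bipartite_with V E X Y"
    and "E1 \<union> E2 = E" and "E1 \<inter> E2 = {}"
  shows "(edge_magic V E \<longrightarrow> edge_magic (S2_vertices X Y) (S2_edges E X Y E1 E2)) \<and>
         (super_edge_magic V E \<longrightarrow> super_edge_magic (S2_vertices X Y) (S2_edges E X Y E1 E2))"
  using edge_magic_labeling_S2[OF assms(2-4)] super_edge_magic_labeling_S2[OF assms(2-4)]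
  unfolding edge_magic_def super_edge_magic_def by blast

end
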